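(* Let $G$ be a finite group and let $C(G)^*$ denote the set of non-trivial cyclic subgroups of $G$. Suppose that $m_G(H_1)=m_G(H_2)$ for all $H_1,H_2\in C(G)^*$. Then $G$ is a $p$-group for some prime $p$, every element of order $p$ of $G$ is central (i.e. $\Omega_1(G)\leq Z(G)$), and in fact $\Omega_1(G)=Z(G)$. Moreover, if $|G|=p^n$, $\exp(G)=p^m$ and $|Z(G)|=p^k$, then $k\leq n-2m+2$.
   Context: For a finite group $G$ and a subgroup $H\leq G$, the Chermak-Delgado measure of $H$ in $G$ is $m_G(H)=|H|\,|C_G(H)|$, where $C_G(H)$ is the centralizer of $H$ in $G$. For a $p$-group $G$, $\Omega_1(G)$ denotes the subgroup generated by all elements of order $p$ in $G$, and $Z(G)$ is the center of $G$. *)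

theory Defs
  imports "HOL-Algebra.Algebra"
begin

definition centralizer :: "('a, 'b) monoid_scheme \<Rightarrow> 'a set \<Rightarrow> 'a set" where
  "centralizer G H = {g \<in> carrier G. \<forall>h \<in> H. g \<otimes>\<^bsub>G\<^esub> h = h \<otimes>\<^bsub>G\<^esub> g}"

definition center :: "('a, 'b) monoid_scheme \<Rightarrow> 'a set" where
  "center G = centralizer G (carrier G)"

definition CD_measure :: "('a, 'b) monoid_scheme \<Rightarrow> 'a set \<Rightarrow> nat" where
  "CD_measure G H = card H * card (centralizer G H)"

definition nontriv_cyclic_subgroups :: "('a, 'b) monoid_scheme \<Rightarrow> 'a set set" where
  "nontriv_cyclic_subgroups G =
     {H. \<exists>a \<in> carrier G. H = generate G {a} \<and> H \<noteq> {\<one>\<^bsub>G\<^esub>}}"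

definition Omega1 :: "('a, 'b) monoid_scheme \<Rightarrow> nat \<Rightarrow> 'a set" where
  "Omega1 G p = generate G {x \<in> carrier G. group.ord G x = p}"

definition group_exponent :: "('a, 'b) monoid_scheme \<Rightarrow> nat" where
  "group_exponent G = Lcm (group.ord G ` carrier G)"

end

theory Submission
  imports Defs
begin

(* For a \<noteq> 1 put c(a) = ord a * |C_G(a)|; by hypothesis c is constant.
   If p divides |G| and P is a Sylow p-subgroup of order p^a, an element z of order p in Z(P)
   is centralized by P, so p^(a+1) divides c(z) = c. Hence every nontrivial element has order
   divisible by p (otherwise its centralizer would have order divisible by p^(a+1)), and Cauchy's
   theorem makes G a p-group. Then z is central and c = p |G|: an element of order p has
   centralizer G, and a nontrivial central element has order p, so Omega_1(G) = Z(G).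
   For b of order p^m = exp G, the set {b^i w | i < p^(m-1), w \<in> Z(G)} lies in C_G(b) and has
   p^(m-1) |Z(G)| elements, because b^i is central only if p^(m-1) divides i; comparing with
   |C_G(b)| = p^(n+1-m) gives the bound on |Z(G)|. *)

lemma (in group) centralizer_subgroup:
  assumes "S \<subseteq> carrier G"
  shows "subgroup (centralizer G S) G"
proof (rule subgroupI)
  show "centralizer G S \<subseteq> carrier G" by (auto simp: centralizer_def)
  show "centralizer G S \<noteq> {}"
    using assms by (auto simp: centralizer_def intro!: exI[of _ \<one>])
next
  fix x assume x: "x \<in> centralizer G S"
  have "inv x \<otimes> h = h \<otimes> inv x" if h: "h \<in> S" for h
  proof -
    have hc: "h \<in> carrier G" and xc: "x \<in> carrier G" and xh: "x \<otimes> h = h \<otimes> x"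
      using assms x h by (auto simp: centralizer_def)
    have "inv x \<otimes> h = inv x \<otimes> (h \<otimes> x) \<otimes> inv x"
      using xc hc by (metis m_assoc r_inv r_one m_closed inv_closed)
    also have "\<dots> = inv x \<otimes> (x \<otimes> h) \<otimes> inv x" by (simp only: xh)
    also have "\<dots> = h \<otimes> inv x" using xc hc by (simp flip: m_assoc)
    finally show ?thesis .
  qed
  with x show "inv x \<in> centralizer G S" by (auto simp: centralizer_def)
next
  fix x y assume "x \<in> centralizer G S" "y \<in> centralizer G S"
  then show "x \<otimes> y \<in> centralizer G S"
    using assms unfolding centralizer_def by (auto simp: m_assoc) (metis m_assoc subsetD)
qed

lemma (in group) center_subgroup: "subgroup (center G) G"
  unfolding center_def by (rule centralizer_subgroup) simp

lemma (in group) card_subgroup_dvd: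
  assumes "subgroup H G" "subgroup K G" "H \<subseteq> K"
  shows "card H dvd card K"
proof -
  interpret K: group "G\<lparr>carrier := K\<rparr>"
    using assms(2) by (rule subgroup_imp_group)
  have "subgroup H (G\<lparr>carrier := K\<rparr>)"
    using assms by (rule subgroup_incl)
  from K.lagrange[OF this] show ?thesis
    by (simp add: order_def) (metis dvd_triv_right)
qed

lemma (in group) ord_dvd_card_subgroup:
  assumes "subgroup H G" "x \<in> H"
  shows "ord x dvd card H"
proof -
  have x: "x \<in> carrier G" using assms subgroup.subset by blast
  have "generate G {x} \<subseteq> H" using assms generate_subgroup_incl by blast
  with x show ?thesis
    using card_subgroup_dvd[OF generate_is_subgroup assms(1)] generate_pow_card by auto
qed

lemma (in group) ord_pow_ord_div:
  assumes "x \<in> carrier G" "ord x \<noteq> 0" "q dvd ord x"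
  shows "ord (x [^] (ord x div q)) = q"
proof -
  obtain k where k: "ord x = q * k" using assms(3) by blast
  then have "k \<noteq> 0" "q \<noteq> 0" using assms(2) by auto
  then show ?thesis using ord_pow[OF assms(1), of k] k by simp
qed

lemma (in group) centralizer_generate_singleton:
  assumes a: "a \<in> carrier G"
  shows "centralizer G (generate G {a}) = centralizer G {a}"
proof
  show "centralizer G (generate G {a}) \<subseteq> centralizer G {a}"
    using generate.incl[of a "{a}" G] by (auto simp: centralizer_def)
  show "centralizer G {a} \<subseteq> centralizer G (generate G {a})"
  proof
    fix g assume g: "g \<in> centralizer G {a}"
    then have gc: "g \<in> carrier G" by (simp add: centralizer_def)
    have "{a} \<subseteq> centralizer G {g}" using a g by (auto simp: centralizer_def)
    then have "generate G {a} \<subseteq> centralizer G {g}"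
      using generate_subgroup_incl centralizer_subgroup gc by blast
    with gc show "g \<in> centralizer G (generate G {a})" by (auto simp: centralizer_def)
  qed
qed

lemma (in group) mem_center_iff_card_centralizer:
  assumes fin: "finite (carrier G)" and x: "x \<in> carrier G"
  shows "x \<in> center G \<longleftrightarrow> card (centralizer G {x}) = order G"
proof -
  have sub: "centralizer G {x} \<subseteq> carrier G" by (auto simp: centralizer_def)
  have "x \<in> center G \<longleftrightarrow> centralizer G {x} = carrier G"
    using x unfolding center_def centralizer_def by (simp add: set_eq_iff) metis
  also have "\<dots> \<longleftrightarrow> card (centralizer G {x}) = order G"
    using card_subset_eq[OF fin sub] unfolding order_def by auto
  finally show ?thesis .
qed

lemma (in group) card_centralizer_dvd_order:
  "x \<in> carrier G \<Longrightarrow> card (centralizer G {x}) dvd order G"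
  using card_subgroup_dvd[OF centralizer_subgroup[of "{x}"] subgroup_self]
  unfolding order_def by (simp add: centralizer_def)

lemma (in group) prime_dvd_ord_in_p_subgroup:
  assumes "Factorial_Ring.prime p" "subgroup P G" "card P = p ^ a" "x \<in> P" "x \<noteq> \<one>"
  shows "p dvd ord x"
proof -
  have "ord x dvd p ^ a" using ord_dvd_card_subgroup assms(2-4) by metis
  then obtain e where e: "ord x = p ^ e" using divides_primepow_nat assms(1) by blast
  have "ord x \<noteq> 1" using ord_eq_1 assms(2,4,5) subgroup.subset by blast
  with e show ?thesis by (cases e) auto
qed

theorem (in group) cauchy:
  assumes "finite (carrier G)" "Factorial_Ring.prime q" "q dvd order G"
  shows "\<exists>y \<in> carrier G. ord y = q"
proof -
  obtain m where "order G = q ^ 1 * m" using assms(3) by auto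
  then obtain P where P: "subgroup P G" "card P = q ^ 1"
    using sylow_thm[of q G 1 m] assms(1,2) is_group by blast
  have "P \<noteq> {\<one>}" using P(2) assms(2) prime_gt_1_nat by auto
  then obtain y where y: "y \<in> P" "y \<noteq> \<one>"
    using P(1) subgroup.one_closed by blast
  have "q dvd ord y" using prime_dvd_ord_in_p_subgroup[OF assms(2) P y] .
  moreover have "ord y dvd q" using ord_dvd_card_subgroup[OF P(1) y(1)] P(2) by simp
  ultimately have "ord y = q" by (simp add: dvd_antisym)
  with y P show ?thesis using subgroup.subset by blast
qed

lemma (in group) conjugation_orbit_singleton_imp_central:
  assumes x: "x \<in> carrier G"
    and fixed: "orbit G (\<lambda>g. \<lambda>h \<in> carrier G. g \<otimes> h \<otimes> inv g) x = {x}"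
  shows "x \<in> center G"
proof -
  have "g \<otimes> x = x \<otimes> g" if g: "g \<in> carrier G" for g
  proof -
    have "(\<lambda>h \<in> carrier G. g \<otimes> h \<otimes> inv g) x
        \<in> orbit G (\<lambda>g. \<lambda>h \<in> carrier G. g \<otimes> h \<otimes> inv g) x"
      unfolding orbit_def using g by blast
    then have "g \<otimes> x \<otimes> inv g = x" using fixed x by simp
    then show ?thesis using g x by (metis inv_solve_right m_closed)
  qed
  then show ?thesis using x by (auto simp: center_def centralizer_def)
qed

lemma (in group) p_group_center_nontrivial:
  assumes fin: "finite (carrier G)" and p: "Factorial_Ring.prime p"
    and order: "order G = p ^ a" and "a > 0"
  shows "\<exists>z \<in> center G. z \<noteq> \<one>"
proof (rule ccontr)
  assume center_trivial: "\<not> ?thesis"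
  define \<phi> where "\<phi> = (\<lambda>g. \<lambda>h \<in> carrier G. g \<otimes> h \<otimes> inv g)"
  interpret conj: group_action G "carrier G" \<phi>
    unfolding \<phi>_def by (rule action_by_conjugation)
  let ?orbs = "orbits G (carrier G) \<phi>"
  have orbit_one: "orbit G \<phi> \<one> = {\<one>}"
    unfolding orbit_def \<phi>_def by force
  have p_dvd_orbit: "p dvd card (orbit G \<phi> x)" if x: "x \<in> carrier G" "x \<noteq> \<one>" for x
  proof -
    have "card (orbit G \<phi> x) dvd p ^ a"
      using conj.orbit_stabilizer_theorem[OF x(1)] order by (metis dvd_triv_left)
    then obtain i where i: "card (orbit G \<phi> x) = p ^ i"
      using divides_primepow_nat[OF p] by blast
    have "orbit G \<phi> x \<noteq> {x}"
      using conjugation_orbit_singleton_imp_central center_trivial x unfolding \<phi>_def by blast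
    then have "card (orbit G \<phi> x) \<noteq> 1"
      using conj.orbit_refl[OF x(1)] by (metis card_1_singletonE singletonD)
    with i show ?thesis by (cases i) auto
  qed
  have finite_orbs: "finite ?orbs"
    unfolding orbits_def using fin by simp
  have one_orb: "{\<one>} \<in> ?orbs"
    unfolding orbits_def using orbit_one by force
  have "p dvd (\<Sum>orb \<in> ?orbs - {{\<one>}}. card orb)"
  proof (rule dvd_sum)
    fix orb assume "orb \<in> ?orbs - {{\<one>}}"
    then obtain x where "x \<in> carrier G" "orb = orbit G \<phi> x" "x \<noteq> \<one>"
      unfolding orbits_def using orbit_one by blast
    then show "p dvd card orb" using p_dvd_orbit by blast
  qed
  moreover have "(\<Sum>orb \<in> ?orbs. card orb) = p ^ a"
    using conj.disjoint_sum[OF fin, of "\<lambda>_. 1::nat"] order unfolding order_def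
    by (simp only: card_eq_sum)
  then have "p ^ a = 1 + (\<Sum>orb \<in> ?orbs - {{\<one>}}. card orb)"
    using sum.remove[OF finite_orbs one_orb, of card] by simp
  moreover have "p dvd p ^ a" using \<open>a > 0\<close> by simp
  ultimately have "p dvd 1" by (metis dvd_add_left_iff)
  then show False using p by simp
qed

lemma (in group) prime_order_element_centralizing_p_subgroup:
  assumes fin: "finite (carrier G)" and p: "Factorial_Ring.prime p"
    and "p ^ a dvd order G" and "a > 0"
  shows "\<exists>z \<in> carrier G. ord z = p \<and> p ^ a dvd card (centralizer G {z})"
proof -
  obtain m where "order G = p ^ a * m" using assms(3) by blast
  then obtain P where P: "subgroup P G" "card P = p ^ a"
    using sylow_thm[of p G a m] assms(1,2) is_group by blast
  have P_sub: "P \<subseteq> carrier G" using P(1) subgroup.subset by blast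
  interpret P: group "G\<lparr>carrier := P\<rparr>" using P(1) by (rule subgroup_imp_group)
  obtain x where x: "x \<in> P" "x \<noteq> \<one>" "\<forall>g \<in> P. x \<otimes> g = g \<otimes> x"
    using P.p_group_center_nontrivial[OF _ p _ \<open>a > 0\<close>] fin P P_sub finite_subset
    by (auto simp: order_def center_def centralizer_def)
  have xc: "x \<in> carrier G" using x(1) P_sub by blast
  have "p dvd ord x" using prime_dvd_ord_in_p_subgroup[OF p P x(1,2)] .
  moreover have "ord x \<noteq> 0" using ord_ge_1[OF fin xc] by simp
  ultimately have ord_z: "ord (x [^] (ord x div p)) = p"
    using ord_pow_ord_div[OF xc] by blast
  have "P \<subseteq> centralizer G {x [^] (ord x div p)}"
    using x(3) xc P_sub group_commutes_pow by (fastforce simp: centralizer_def)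
  then have "p ^ a dvd card (centralizer G {x [^] (ord x div p)})"
    using card_subgroup_dvd[OF P(1) centralizer_subgroup] xc P(2) by auto
  with ord_z xc show ?thesis by blast
qed

lemma Lcm_prime_powers_mem:
  fixes S :: "nat set"
  assumes "finite S" "S \<noteq> {}" "Factorial_Ring.prime p" "S \<subseteq> range (\<lambda>e. p ^ e)"
  shows "Lcm S \<in> S"
proof -
  have "s dvd Max S" if s: "s \<in> S" for s
  proof -
    have "Max S \<in> S" using assms(1,2) by simp
    then obtain f where f: "Max S = p ^ f" using assms(4) by auto
    obtain e where e: "s = p ^ e" using assms(4) s by auto
    have "p ^ e \<le> p ^ f" using Max_ge[OF assms(1) s] e f by simp
    then have "e \<le> f" using assms(3) prime_gt_1_nat power_le_imp_le_exp by blast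
    then show ?thesis using e f by (simp add: le_imp_power_dvd)
  qed
  then have "Lcm S = Max S" using assms(1,2) by (simp add: Lcm_least dvd_Lcm dvd_antisym)
  then show ?thesis using assms(1,2) by simp
qed

lemma (in group) group_exponent_attained:
  assumes fin: "finite (carrier G)" and p: "Factorial_Ring.prime p" and order: "order G = p ^ n"
  shows "\<exists>b \<in> carrier G. ord b = group_exponent G"
proof -
  have "ord ` carrier G \<subseteq> range (\<lambda>e. p ^ e)"
    using ord_dvd_group_order order by (auto simp: divides_primepow_nat[OF p])
  then have "Lcm (ord ` carrier G) \<in> ord ` carrier G"
    using Lcm_prime_powers_mem[OF _ _ p] fin by blast
  then show ?thesis unfolding group_exponent_def by force
qed

lemma (in group) pow_mem_center_imp_eq_0:
  assumes b: "b \<in> carrier G" and ord_b: "ord b = j * q" and "q \<noteq> 0"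
    and center_exp: "\<And>w. w \<in> center G \<Longrightarrow> w [^] q = \<one>"
    and central: "b [^] d \<in> center G" and "d < j"
  shows "d = 0"
proof -
  have "b [^] (d * q) = \<one>" using center_exp[OF central] b by (simp add: nat_pow_pow)
  then have "j * q dvd d * q" using b ord_b pow_eq_id by metis
  then have "j dvd d" using \<open>q \<noteq> 0\<close> by simp
  with \<open>d < j\<close> show ?thesis using dvd_imp_le not_le by blast
qed

lemma (in group) card_powers_times_center_le:
  assumes fin: "finite (carrier G)" and b: "b \<in> carrier G" and ord_b: "ord b = j * q"
    and center_exp: "\<And>w. w \<in> center G \<Longrightarrow> w [^] q = \<one>"
  shows "j * card (center G) \<le> card (centralizer G {b})"
proof -
  have "q \<noteq> 0" using ord_b ord_ge_1[OF fin b] by auto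
  have center_carrier: "center G \<subseteq> carrier G" by (auto simp: center_def centralizer_def)
  have eq_of_le: "i = i' \<and> w = w'"
    if "i \<le> i'" "i' < j" "w \<in> center G" "w' \<in> center G" "b [^] i \<otimes> w = b [^] i' \<otimes> w'"
    for i i' w w'
  proof -
    have wc: "w \<in> carrier G" "w' \<in> carrier G" using that(3,4) center_carrier by auto
    have "b [^] i' = b [^] i \<otimes> b [^] (i' - i)" using b that(1) by (simp add: nat_pow_mult)
    then have "b [^] i \<otimes> w = b [^] i \<otimes> (b [^] (i' - i) \<otimes> w')"
      using that(5) b wc by (simp add: m_assoc)
    then have w_eq: "w = b [^] (i' - i) \<otimes> w'" using b wc by simp
    then have "b [^] (i' - i) = w \<otimes> inv w'" using b wc by (simp add: m_assoc)
    moreover have "w \<otimes> inv w' \<in> center G"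
      using that(3,4) center_subgroup subgroup.m_closed subgroup.m_inv_closed by metis
    ultimately have central: "b [^] (i' - i) \<in> center G" by simp
    have "i' - i < j" using that(2) by linarith
    from pow_mem_center_imp_eq_0[OF b ord_b \<open>q \<noteq> 0\<close> center_exp central this]
    have "i' - i = 0" .
    with that(1) w_eq b wc show ?thesis by simp
  qed
  define f where "f = (\<lambda>(i :: nat, w). b [^] i \<otimes> w)"
  have "inj_on f ({..<j} \<times> center G)"
  proof (rule inj_onI, clarsimp simp: f_def)
    fix i i' w w'
    assume "i < j" "i' < j" "w \<in> center G" "w' \<in> center G" "b [^] i \<otimes> w = b [^] i' \<otimes> w'"
    then show "i = i' \<and> w = w'"
      using eq_of_le[of i i' w w'] eq_of_le[of i' i w' w] by (cases "i \<le> i'") auto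
  qed
  moreover have "f ` ({..<j} \<times> center G) \<subseteq> centralizer G {b}"
  proof clarsimp
    fix i :: nat and w assume "w \<in> center G"
    then have "w \<in> centralizer G {b}" "b [^] i \<in> centralizer G {b}"
      using b group_commutes_pow[of b b i] by (auto simp: center_def centralizer_def)
    then show "f (i, w) \<in> centralizer G {b}"
      unfolding f_def using centralizer_subgroup[of "{b}"] b subgroup.m_closed by fastforce
  qed
  moreover have "finite (centralizer G {b})"
    using fin by (auto simp: centralizer_def)
  ultimately show ?thesis
    using card_inj_on_le by (fastforce simp: card_cartesian_product)
qed

lemma (in group) CD_measure_generate_singleton:
  "a \<in> carrier G \<Longrightarrow> CD_measure G (generate G {a}) = ord a * card (centralizer G {a})"
  unfolding CD_measure_def by (simp add: generate_pow_card centralizer_generate_singleton)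

lemma (in group) generate_singleton_mem_nontriv_cyclic_subgroups:
  assumes "a \<in> carrier G" "a \<noteq> \<one>"
  shows "generate G {a} \<in> nontriv_cyclic_subgroups G"
  using assms generate.incl[of a "{a}" G] unfolding nontriv_cyclic_subgroups_def by blast

locale equal_cyclic_measures = group +
  assumes finite_carrier: "finite (carrier G)"
    and measure_eq: "\<lbrakk>a \<in> carrier G; a \<noteq> \<one>; b \<in> carrier G; b \<noteq> \<one>\<rbrakk> \<Longrightarrow>
      ord a * card (centralizer G {a}) = ord b * card (centralizer G {b})"
begin

lemma prime_dvd_ord:
  assumes p: "Factorial_Ring.prime p" "p dvd order G" and y: "y \<in> carrier G" "y \<noteq> \<one>"
  shows "p dvd ord y"
proof (rule ccontr)
  assume p_ndvd: "\<not> p dvd ord y"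
  have "order G \<noteq> 0" using finite_carrier order_gt_0_iff_finite by simp
  then obtain a r where r: "order G = p ^ a * r" "\<not> p dvd r"
    using multiplicity_decompose' p(1) not_prime_unit by metis
  have "a > 0" using r p(2) by (cases a) auto
  moreover have "p ^ a dvd order G" using r(1) by simp
  ultimately obtain z where z: "z \<in> carrier G" "ord z = p" "p ^ a dvd card (centralizer G {z})"
    using prime_order_element_centralizing_p_subgroup[OF finite_carrier p(1)] by blast
  have "z \<noteq> \<one>" using z(2) p(1) by auto
  then have "ord y * card (centralizer G {y}) = p * card (centralizer G {z})"
    using measure_eq[OF y z(1)] z(2) by simp
  then have "p ^ Suc a dvd ord y * card (centralizer G {y})" using z(3) by simp
  moreover have "coprime (p ^ Suc a) (ord y)" using p_ndvd p(1) by (simp add: prime_imp_coprime)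
  ultimately have "p ^ Suc a dvd card (centralizer G {y})"
    using coprime_dvd_mult_right_iff by blast
  also have "card (centralizer G {y}) dvd order G" using card_centralizer_dvd_order[OF y(1)] .
  finally have "p ^ Suc a dvd p ^ a * r" using r(1) by simp
  then show False using r(2) p(1) by simp
qed

lemma prime_power_order: "\<exists>p n. Factorial_Ring.prime p \<and> order G = p ^ n"
proof (cases "order G = 1")
  case True
  then show ?thesis by (intro exI[of _ 2] exI[of _ 0]) auto
next
  case False
  then obtain p where p: "Factorial_Ring.prime p" "p dvd order G" using prime_factor_nat by blast
  have "order G \<noteq> 0" using finite_carrier order_gt_0_iff_finite by simp
  then obtain a r where r: "order G = p ^ a * r" "\<not> p dvd r"
    using multiplicity_decompose' p(1) not_prime_unit by metis
  have "r = 1"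
  proof (rule ccontr)
    assume "r \<noteq> 1"
    then obtain q where q: "Factorial_Ring.prime q" "q dvd r" using prime_factor_nat by blast
    then obtain y where y: "y \<in> carrier G" "ord y = q"
      using cauchy[OF finite_carrier q(1)] r(1) by auto
    then have "y \<noteq> \<one>" using q(1) by auto
    then have "p dvd q" using prime_dvd_ord[OF p y(1)] y(2) by simp
    then have "p = q" using p(1) q(1) primes_dvd_imp_eq by blast
    then show False using q(2) r(2) by simp
  qed
  with p r show ?thesis by auto
qed

context
  fixes p n
  assumes p: "Factorial_Ring.prime p" and order_eq: "order G = p ^ n"
begin

lemma measure_eq_prime_times_order:
  assumes y: "y \<in> carrier G" "y \<noteq> \<one>"
  shows "ord y * card (centralizer G {y}) = p * order G"
proof -
  have "{\<one>, y} \<subseteq> carrier G" using y by simp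
  then have "card {\<one>, y} \<le> order G" unfolding order_def by (rule card_mono[OF finite_carrier])
  then have "2 \<le> order G" using y(2) by simp
  then have "n > 0" using order_eq by (cases n) auto
  then obtain z where z: "z \<in> carrier G" "ord z = p" "p ^ n dvd card (centralizer G {z})"
    using prime_order_element_centralizing_p_subgroup[OF finite_carrier p _ \<open>n > 0\<close>] order_eq
    by auto
  then have "card (centralizer G {z}) = order G"
    using card_centralizer_dvd_order[OF z(1)] order_eq by (simp add: dvd_antisym)
  moreover have "z \<noteq> \<one>" using z(2) p by auto
  ultimately show ?thesis using measure_eq[OF y z(1)] z(2) by simp
qed

lemma ord_eq_prime_imp_central:
  assumes "x \<in> carrier G" "ord x = p"
  shows "x \<in> center G"
proof -
  have "x \<noteq> \<one>" using assms p by auto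
  then have "card (centralizer G {x}) = order G"
    using measure_eq_prime_times_order[OF assms(1)] assms(2) p by simp
  then show ?thesis using mem_center_iff_card_centralizer[OF finite_carrier assms(1)] by simp
qed

lemma central_imp_ord_eq_prime:
  assumes "w \<in> center G" "w \<noteq> \<one>"
  shows "ord w = p"
proof -
  have w: "w \<in> carrier G" using assms(1) by (simp add: center_def centralizer_def)
  then have "ord w * order G = p * order G"
    using measure_eq_prime_times_order[OF w assms(2)]
      mem_center_iff_card_centralizer[OF finite_carrier w] assms(1) by simp
  then show ?thesis using finite_carrier order_gt_0_iff_finite by simp
qed

lemma Omega1_eq_center: "Omega1 G p = center G"
proof
  show "Omega1 G p \<subseteq> center G"
    unfolding Omega1_def
    using ord_eq_prime_imp_central by (intro generate_subgroup_incl[OF _ center_subgroup]) blast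
  show "center G \<subseteq> Omega1 G p"
  proof
    fix w assume w: "w \<in> center G"
    show "w \<in> Omega1 G p"
    proof (cases "w = \<one>")
      case True
      then show ?thesis unfolding Omega1_def by (simp add: generate.one)
    next
      case False
      then have "w \<in> {x \<in> carrier G. ord x = p}"
        using w central_imp_ord_eq_prime by (simp add: center_def centralizer_def)
      then show ?thesis unfolding Omega1_def by (rule generate.incl)
    qed
  qed
qed

lemma card_center_exponent_bound:
  assumes m: "group_exponent G = p ^ m" and k: "card (center G) = p ^ k"
  shows "k + 2 * m \<le> n + 2"
proof (cases m)
  case 0
  have "card (center G) \<le> order G"
    using finite_carrier card_mono unfolding order_def by (fastforce simp: center_def centralizer_def)
  then have "k \<le> n" using k order_eq p prime_gt_1_nat power_le_imp_le_exp by metis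
  with 0 show ?thesis by simp
next
  case (Suc j)
  obtain b where b: "b \<in> carrier G" "ord b = p ^ j * p"
    using group_exponent_attained[OF finite_carrier p order_eq] m Suc by auto
  then have "b \<noteq> \<one>" using p prime_gt_1_nat by auto
  then have centralizer_b: "p ^ Suc j * card (centralizer G {b}) = p * p ^ n"
    using measure_eq_prime_times_order[OF b(1)] b(2) order_eq by (simp add: mult.commute)
  have "w [^] p = \<one>" if "w \<in> center G" for w
    using that central_imp_ord_eq_prime[OF that] pow_ord_eq_1
    by (cases "w = \<one>") (auto simp: center_def centralizer_def)
  then have "p ^ j * p ^ k \<le> card (centralizer G {b})"
    using card_powers_times_center_le[OF finite_carrier b] k by simp
  then have "p ^ Suc j * (p ^ j * p ^ k) \<le> p * p ^ n"
    using centralizer_b by (metis mult_le_mono2)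
  then have "p ^ (Suc j + j + k) \<le> p ^ Suc n" by (simp add: power_add mult.assoc)
  then have "Suc j + j + k \<le> Suc n" using p prime_gt_1_nat power_le_imp_le_exp by blast
  with Suc show ?thesis by simp
qed

end

end

theorem theorem1p1:
  fixes G :: "('a, 'b) monoid_scheme"
  assumes "group G"
    and "finite (carrier G)"
    and "\<forall>H1 \<in> nontriv_cyclic_subgroups G. \<forall>H2 \<in> nontriv_cyclic_subgroups G.
           CD_measure G H1 = CD_measure G H2"
  shows "\<exists>p::nat. Factorial_Ring.prime p \<and> (\<exists>n::nat. order G = p ^ n)
           \<and> (\<forall>x \<in> carrier G. group.ord G x = p \<longrightarrow> x \<in> center G)
           \<and> Omega1 G p \<subseteq> center G
           \<and> Omega1 G p = center G
           \<and> (\<forall>n m k :: nat. order G = p ^ n \<longrightarrow> group_exponent G = p ^ m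
                \<longrightarrow> card (center G) = p ^ k \<longrightarrow> int k \<le> int n - 2 * int m + 2)"
proof -
  interpret group G by fact
  interpret equal_cyclic_measures G
  proof
    fix a b assume "a \<in> carrier G" "a \<noteq> \<one>\<^bsub>G\<^esub>" "b \<in> carrier G" "b \<noteq> \<one>\<^bsub>G\<^esub>"
    then show "ord a * card (centralizer G {a}) = ord b * card (centralizer G {b})"
      using assms(3) generate_singleton_mem_nontriv_cyclic_subgroups
      by (metis CD_measure_generate_singleton)
  qed (fact assms(2))
  obtain p n where p: "Factorial_Ring.prime p" and order_eq: "order G = p ^ n"
    using prime_power_order by blast
  have "int k \<le> int n' - 2 * int m + 2"
    if "order G = p ^ n'" "group_exponent G = p ^ m" "card (center G) = p ^ k" for n' m k
    using card_center_exponent_bound[OF p that(1,2,3)] by simp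
  then show ?thesis
    using p order_eq ord_eq_prime_imp_central[OF p order_eq] Omega1_eq_center[OF p order_eq]
    by auto
qed

end
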